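(* Let $X$ be an SL-space with spatial part $Y$. Then $X$ is an algebraic L-space if and only if $Y$ is a compactly based sober space.
   Context: A Priestley space is a Stone space $X$ with a partial order such that clopen upsets separate points. An L-space is a Priestley space in which the downset of each clopen set is clopen and the closure of each open upset is open. ${\sf ClopUp}(X)$ is the set of clopen upsets. The spatial part of $X$ is $Y=\{y\in X\mid{\downarrow}y\text{ is clopen}\}$, topologized by declaring $V\subseteq Y$ open iff $V=U\cap Y$ for some $U\in{\sf ClopUp}(X)$. $X$ is an SL-space if $Y$ is dense in $X$. A Scott upset is a closed upset $F$ with $\min F\subseteq Y$; ${\sf ClopSUp}(X)$ is the set of clopen Scott upsets; $\mathrm{core}\,U=\bigcup\{V\in{\sf ClopSUp}(X)\mid V\subseteq U\}$. $X$ is an algebraic L-space if $\mathrm{core}\,U$ is dense in $U$ for each $U\in{\sf ClopUp}(X)$. A topological space is compactly based if it has a basis of compact open sets; it is sober if every irreducible closed set is the closure of a unique point. *)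

theory Defs
  imports "HOL-Analysis.Analysis"
begin

text \<open>A space X is given by a topology T on the carrier topspace T together with a
  binary relation le, intended as a partial order on topspace T.\<close>

definition clopen_in :: "'a topology \<Rightarrow> 'a set \<Rightarrow> bool" where
  "clopen_in T A \<longleftrightarrow> openin T A \<and> closedin T A"

definition stone_space :: "'a topology \<Rightarrow> bool" where
  "stone_space T \<longleftrightarrow> compact_space T \<and> Hausdorff_space T \<and>
     (\<forall>W x. openin T W \<and> x \<in> W \<longrightarrow> (\<exists>C. clopen_in T C \<and> x \<in> C \<and> C \<subseteq> W))"

definition partial_order_on_set :: "'a set \<Rightarrow> ('a \<Rightarrow> 'a \<Rightarrow> bool) \<Rightarrow> bool" where
  "partial_order_on_set S le \<longleftrightarrow>
     (\<forall>x\<in>S. le x x) \<and>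
     (\<forall>x\<in>S. \<forall>y\<in>S. le x y \<and> le y x \<longrightarrow> x = y) \<and>
     (\<forall>x\<in>S. \<forall>y\<in>S. \<forall>z\<in>S. le x y \<and> le y z \<longrightarrow> le x z)"

definition is_upset :: "'a topology \<Rightarrow> ('a \<Rightarrow> 'a \<Rightarrow> bool) \<Rightarrow> 'a set \<Rightarrow> bool" where
  "is_upset T le U \<longleftrightarrow> U \<subseteq> topspace T \<and>
     (\<forall>x\<in>U. \<forall>y\<in>topspace T. le x y \<longrightarrow> y \<in> U)"

definition down_set :: "'a topology \<Rightarrow> ('a \<Rightarrow> 'a \<Rightarrow> bool) \<Rightarrow> 'a set \<Rightarrow> 'a set" where
  "down_set T le A = {y \<in> topspace T. \<exists>x\<in>A. le y x}"

definition ClopUp :: "'a topology \<Rightarrow> ('a \<Rightarrow> 'a \<Rightarrow> bool) \<Rightarrow> 'a set set" where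
  "ClopUp T le = {U. clopen_in T U \<and> is_upset T le U}"

definition priestley_space :: "'a topology \<Rightarrow> ('a \<Rightarrow> 'a \<Rightarrow> bool) \<Rightarrow> bool" where
  "priestley_space T le \<longleftrightarrow> stone_space T \<and> partial_order_on_set (topspace T) le \<and>
     (\<forall>x\<in>topspace T. \<forall>y\<in>topspace T. \<not> le x y \<longrightarrow>
        (\<exists>U\<in>ClopUp T le. x \<in> U \<and> y \<notin> U))"

definition L_space :: "'a topology \<Rightarrow> ('a \<Rightarrow> 'a \<Rightarrow> bool) \<Rightarrow> bool" where
  "L_space T le \<longleftrightarrow> priestley_space T le \<and>
     (\<forall>C. clopen_in T C \<longrightarrow> clopen_in T (down_set T le C)) \<and>
     (\<forall>U. openin T U \<and> is_upset T le U \<longrightarrow> openin T (T closure_of U))"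

definition spatial_part :: "'a topology \<Rightarrow> ('a \<Rightarrow> 'a \<Rightarrow> bool) \<Rightarrow> 'a set" where
  "spatial_part T le = {y \<in> topspace T. clopen_in T (down_set T le {y})}"

text \<open>The topology on the spatial part: V is open iff V = U \<inter> Y for a clopen upset U.
  (That this family is a topology is part of the paper's setting for L-spaces.)\<close>

definition spatial_topology :: "'a topology \<Rightarrow> ('a \<Rightarrow> 'a \<Rightarrow> bool) \<Rightarrow> 'a topology" where
  "spatial_topology T le =
     topology (\<lambda>V. \<exists>U\<in>ClopUp T le. V = U \<inter> spatial_part T le)"

definition SL_space :: "'a topology \<Rightarrow> ('a \<Rightarrow> 'a \<Rightarrow> bool) \<Rightarrow> bool" where
  "SL_space T le \<longleftrightarrow> L_space T le \<and> T closure_of (spatial_part T le) = topspace T"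

definition minimal_elements :: "('a \<Rightarrow> 'a \<Rightarrow> bool) \<Rightarrow> 'a set \<Rightarrow> 'a set" where
  "minimal_elements le F = {x \<in> F. \<forall>y\<in>F. le y x \<longrightarrow> y = x}"

definition scott_upset :: "'a topology \<Rightarrow> ('a \<Rightarrow> 'a \<Rightarrow> bool) \<Rightarrow> 'a set \<Rightarrow> bool" where
  "scott_upset T le F \<longleftrightarrow> closedin T F \<and> is_upset T le F \<and>
     minimal_elements le F \<subseteq> spatial_part T le"

definition ClopSUp :: "'a topology \<Rightarrow> ('a \<Rightarrow> 'a \<Rightarrow> bool) \<Rightarrow> 'a set set" where
  "ClopSUp T le = {V. clopen_in T V \<and> scott_upset T le V}"

definition core :: "'a topology \<Rightarrow> ('a \<Rightarrow> 'a \<Rightarrow> bool) \<Rightarrow> 'a set \<Rightarrow> 'a set" where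
  "core T le U = \<Union>{V \<in> ClopSUp T le. V \<subseteq> U}"

definition algebraic_L_space :: "'a topology \<Rightarrow> ('a \<Rightarrow> 'a \<Rightarrow> bool) \<Rightarrow> bool" where
  "algebraic_L_space T le \<longleftrightarrow> L_space T le \<and>
     (\<forall>U\<in>ClopUp T le. U \<subseteq> T closure_of (core T le U))"

definition compactly_based :: "'a topology \<Rightarrow> bool" where
  "compactly_based S \<longleftrightarrow>
     (\<forall>W x. openin S W \<and> x \<in> W \<longrightarrow> (\<exists>K. openin S K \<and> compactin S K \<and> x \<in> K \<and> K \<subseteq> W))"

definition irreducible_closed :: "'a topology \<Rightarrow> 'a set \<Rightarrow> bool" where
  "irreducible_closed S A \<longleftrightarrow> closedin S A \<and> A \<noteq> {} \<and>
     (\<forall>B C. closedin S B \<and> closedin S C \<and> A = B \<union> C \<longrightarrow> A = B \<or> A = C)"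

definition sober_space :: "'a topology \<Rightarrow> bool" where
  "sober_space S \<longleftrightarrow>
     (\<forall>A. irreducible_closed S A \<longrightarrow> (\<exists>!x. x \<in> topspace S \<and> A = S closure_of {x}))"

end

theory Submission
  imports Defs
begin

(*
  The spatial part Y of any L-space X is sober. Given an irreducible closed A of Y,
  compactness of X yields a point x lying in exactly those clopen upsets that meet A.
  The complement of the down set of x is the union of the clopen upsets missing A; its
  closure is again a clopen upset, and it still misses A because every point of A has a
  clopen down set. So the down set of x is clopen, x is spatial, and A is its closure.

  In an SL-space a clopen upset V has compact trace on Y iff V is a Scott upset. Every
  point of a Scott upset lies above a minimal, hence spatial, point, so a clopen-upset
  cover of the trace covers the compact set V. Conversely, if a minimal point m of V
  were not spatial, finitely many clopen upsets avoiding m would cover the trace of V,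
  hence by density of Y all of V. Thus the compact opens of Y are the traces of clopen
  Scott upsets, and Y is compactly based iff each core U is dense in U.
*)

lemma compact_space_Inter_chain_nonempty:
  assumes "compact_space X"
    and "\<And>C. C \<in> \<C> \<Longrightarrow> closedin X C \<and> C \<noteq> {}"
    and "\<And>C D. C \<in> \<C> \<Longrightarrow> D \<in> \<C> \<Longrightarrow> C \<subseteq> D \<or> D \<subseteq> C"
  shows "\<Inter>\<C> \<noteq> {}"
proof -
  have "\<Inter>\<F> \<noteq> {}" if "finite \<F>" "\<F> \<subseteq> \<C>" for \<F>
  proof (cases "\<F> = {}")
    case False
    have "subset.chain \<C> \<F>"
      using that assms(3) by (auto simp: subset_chain_def)
    then have "\<Inter>\<F> \<in> \<F>"
      using Inter_in_chain that(1) False by blast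
    then show ?thesis
      using assms(2) that(2) by blast
  qed simp
  moreover have "\<forall>C\<in>\<C>. closedin X C"
    using assms(2) by blast
  ultimately show ?thesis
    using assms(1) by (simp add: compact_space_fip)
qed

lemma irreducible_closed_open_Int:
  assumes "irreducible_closed X A" "openin X U" "openin X V" "U \<inter> A \<noteq> {}" "V \<inter> A \<noteq> {}"
  shows "U \<inter> V \<inter> A \<noteq> {}"
proof
  assume "U \<inter> V \<inter> A = {}"
  then have "A = (A - U) \<union> (A - V)"
    by blast
  moreover have "closedin X (A - U)" "closedin X (A - V)"
    using assms(1-3) by (auto simp: irreducible_closed_def closedin_diff)
  ultimately have "A = A - U \<or> A = A - V"
    using assms(1) unfolding irreducible_closed_def by blast
  then show False
    using assms(4,5) by blast
qed

lemma ClopUp_openin: "U \<in> ClopUp T le \<Longrightarrow> openin T U"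
  by (simp add: ClopUp_def clopen_in_def)

lemma ClopUp_closedin: "U \<in> ClopUp T le \<Longrightarrow> closedin T U"
  by (simp add: ClopUp_def clopen_in_def)

lemma ClopUp_subset_topspace: "U \<in> ClopUp T le \<Longrightarrow> U \<subseteq> topspace T"
  by (simp add: ClopUp_def is_upset_def)

lemma ClopUp_upward:
  "U \<in> ClopUp T le \<Longrightarrow> x \<in> U \<Longrightarrow> y \<in> topspace T \<Longrightarrow> le x y \<Longrightarrow> y \<in> U"
  by (simp add: ClopUp_def is_upset_def)

lemma topspace_ClopUp: "topspace T \<in> ClopUp T le"
  by (simp add: ClopUp_def clopen_in_def is_upset_def)

lemma Int_ClopUp: "U \<in> ClopUp T le \<Longrightarrow> V \<in> ClopUp T le \<Longrightarrow> U \<inter> V \<in> ClopUp T le"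
  by (auto simp: ClopUp_def clopen_in_def is_upset_def)

lemma Union_ClopUp: "finite \<G> \<Longrightarrow> \<G> \<subseteq> ClopUp T le \<Longrightarrow> \<Union>\<G> \<in> ClopUp T le"
  by (induction \<G> rule: finite_induct) (auto simp: ClopUp_def clopen_in_def is_upset_def)

lemma Inter_ClopUp_meets:
  assumes meets: "\<And>U V. U \<in> ClopUp T le \<Longrightarrow> V \<in> ClopUp T le \<Longrightarrow>
                    U \<inter> A \<noteq> {} \<Longrightarrow> V \<inter> A \<noteq> {} \<Longrightarrow> U \<inter> V \<inter> A \<noteq> {}"
    and "finite \<G>" "\<G> \<noteq> {}" "\<G> \<subseteq> {U \<in> ClopUp T le. U \<inter> A \<noteq> {}}"
  shows "\<Inter>\<G> \<in> ClopUp T le \<and> \<Inter>\<G> \<inter> A \<noteq> {}"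
  using assms(2-4)
proof (induction \<G> rule: finite_ne_induct)
  case (insert U \<G>)
  then have "U \<in> ClopUp T le" "U \<inter> A \<noteq> {}" "\<Inter>\<G> \<in> ClopUp T le" "\<Inter>\<G> \<inter> A \<noteq> {}"
    by simp_all
  then show ?case
    using meets[of U "\<Inter>\<G>"] Int_ClopUp[of U T le "\<Inter>\<G>"] by simp
qed simp

lemma ClopSUp_subset_ClopUp: "ClopSUp T le \<subseteq> ClopUp T le"
  unfolding ClopSUp_def ClopUp_def scott_upset_def by blast

locale priestley =
  fixes T :: "'a topology" and le :: "'a \<Rightarrow> 'a \<Rightarrow> bool"
  assumes priestley: "priestley_space T le"
begin

lemma stone: "stone_space T"
  using priestley by (simp add: priestley_space_def)

lemma partial_order: "partial_order_on_set (topspace T) le"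
  using priestley by (simp add: priestley_space_def)

lemma compact: "compact_space T"
  using stone by (simp add: stone_space_def)

lemma clopen_basis: "openin T W \<Longrightarrow> x \<in> W \<Longrightarrow> \<exists>C. clopen_in T C \<and> x \<in> C \<and> C \<subseteq> W"
  using stone unfolding stone_space_def by blast

lemma le_refl: "x \<in> topspace T \<Longrightarrow> le x x"
  using partial_order unfolding partial_order_on_set_def by blast

lemma le_antisym: "x \<in> topspace T \<Longrightarrow> y \<in> topspace T \<Longrightarrow> le x y \<Longrightarrow> le y x \<Longrightarrow> x = y"
  using partial_order unfolding partial_order_on_set_def by blast

lemma le_trans:
  "x \<in> topspace T \<Longrightarrow> y \<in> topspace T \<Longrightarrow> z \<in> topspace T \<Longrightarrow> le x y \<Longrightarrow> le y z \<Longrightarrow> le x z"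
  using partial_order unfolding partial_order_on_set_def by blast

lemma ClopUp_separation:
  "x \<in> topspace T \<Longrightarrow> y \<in> topspace T \<Longrightarrow> \<not> le x y \<Longrightarrow> \<exists>U\<in>ClopUp T le. x \<in> U \<and> y \<notin> U"
  using priestley unfolding priestley_space_def by blast

lemma topspace_diff_down_point:
  assumes "x \<in> topspace T"
  shows "topspace T - down_set T le {x} = \<Union>{U \<in> ClopUp T le. x \<notin> U}"
  using ClopUp_separation[OF _ assms] ClopUp_upward[of _ T le _ x] ClopUp_subset_topspace assms
  by (fastforce simp: down_set_def)

lemma closedin_down_point: "x \<in> topspace T \<Longrightarrow> closedin T (down_set T le {x})"
  unfolding closedin_def topspace_diff_down_point
  by (auto simp: down_set_def intro: ClopUp_openin)

lemma closedin_chain_lower_bound: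
  assumes F: "closedin T F" and C: "C \<subseteq> F" "C \<noteq> {}"
    and comparable: "\<And>c d. c \<in> C \<Longrightarrow> d \<in> C \<Longrightarrow> le c d \<or> le d c"
  obtains u where "u \<in> F" "\<And>c. c \<in> C \<Longrightarrow> le u c"
proof -
  have FT: "F \<subseteq> topspace T"
    using F closedin_subset by blast
  define \<C> where "\<C> = (\<lambda>c. F \<inter> down_set T le {c}) ` C"
  have "\<Inter>\<C> \<noteq> {}"
  proof (rule compact_space_Inter_chain_nonempty[OF compact])
    fix D
    assume "D \<in> \<C>"
    then obtain c where c: "c \<in> C" and D: "D = F \<inter> down_set T le {c}"
      unfolding \<C>_def by blast
    have "c \<in> D"
      using c C FT le_refl unfolding D down_set_def by blast
    then show "closedin T D \<and> D \<noteq> {}"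
      using F c C FT closedin_down_point unfolding D by blast
  next
    have "F \<inter> down_set T le {c} \<subseteq> F \<inter> down_set T le {d}" if "c \<in> C" "d \<in> C" "le c d" for c d
      using that C FT le_trans[of _ c d] unfolding down_set_def by blast
    then show "D \<subseteq> D' \<or> D' \<subseteq> D" if "D \<in> \<C>" "D' \<in> \<C>" for D D'
      using that comparable unfolding \<C>_def by blast
  qed
  then obtain u where u: "u \<in> \<Inter>\<C>"
    by blast
  then show thesis
    using that C(2) unfolding \<C>_def down_set_def by blast
qed

lemma exists_minimal_below:
  assumes F: "closedin T F" and x: "x \<in> F"
  obtains m where "m \<in> minimal_elements le F" "le m x"
proof -
  have FT: "F \<subseteq> topspace T"
    using F closedin_subset by blast
  define A where "A = {z \<in> F. le z x}"
  have po: "partial_order_on A (relation_of (\<lambda>a b. le b a) A)"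
  proof (rule partial_order_on_relation_ofI)
    show "le a a" if "a \<in> A" for a
      using that FT le_refl unfolding A_def by blast
    show "le c a" if "a \<in> A" "b \<in> A" "c \<in> A" "le b a" "le c b" for a b c
      using that FT le_trans[of c b a] unfolding A_def by blast
    show "a = b" if "a \<in> A" "b \<in> A" "le b a" "le a b" for a b
      using that FT le_antisym[of a b] unfolding A_def by blast
  qed
  have chain_bound: "\<exists>u\<in>A. \<forall>c\<in>C. le u c" if C: "C \<in> Chains (relation_of (\<lambda>a b. le b a) A)" for C
  proof (cases "C = {}")
    case True
    then show ?thesis
      using x FT le_refl unfolding A_def by blast
  next
    case False
    have CA: "C \<subseteq> A"
      using Chains_relation_of[OF C] .
    moreover have "le c d \<or> le d c" if "c \<in> C" "d \<in> C" for c d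
      using C that unfolding Chains_def relation_of_def by blast
    ultimately obtain u where u: "u \<in> F" "\<And>c. c \<in> C \<Longrightarrow> le u c"
      using closedin_chain_lower_bound[OF F _ False] unfolding A_def by blast
    obtain c0 where "c0 \<in> C"
      using False by blast
    then have "le u x"
      using le_trans[of u c0 x] u CA x FT unfolding A_def by blast
    then show ?thesis
      using u unfolding A_def by blast
  qed
  obtain m where m: "m \<in> A" "\<forall>a\<in>A. le a m \<longrightarrow> a = m"
    using predicate_Zorn[OF po chain_bound] by blast
  have "m \<in> minimal_elements le F"
    unfolding minimal_elements_def
  proof (intro CollectI conjI ballI impI)
    show "m \<in> F"
      using m(1) unfolding A_def by blast
    fix y
    assume "y \<in> F" "le y m"
    then have "y \<in> A"
      using m(1) x FT le_trans[of y m x] unfolding A_def by blast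
    then show "y = m"
      using m(2) \<open>le y m\<close> by blast
  qed
  then show thesis
    using that m(1) unfolding A_def by blast
qed

lemma spatial_in_closure_Union_ClopUp:
  assumes "\<G> \<subseteq> ClopUp T le" "y \<in> spatial_part T le" "y \<in> T closure_of \<Union>\<G>"
  shows "\<exists>U\<in>\<G>. y \<in> U"
proof -
  have yT: "y \<in> topspace T" and down_open: "openin T (down_set T le {y})"
    using assms(2) unfolding spatial_part_def clopen_in_def by blast+
  have "y \<in> down_set T le {y}"
    using yT le_refl unfolding down_set_def by blast
  then obtain z where "z \<in> down_set T le {y}" "z \<in> \<Union>\<G>"
    using assms(3) down_open unfolding in_closure_of by blast
  then obtain U where "U \<in> \<G>" "z \<in> U" "le z y"
    unfolding down_set_def by blast
  then show ?thesis
    using assms(1) yT ClopUp_upward[of U T le z y] by blast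
qed

lemma exists_point_ClopUp_iff_meets:
  assumes A: "A \<subseteq> topspace T" "A \<noteq> {}"
    and meets: "\<And>U V. U \<in> ClopUp T le \<Longrightarrow> V \<in> ClopUp T le \<Longrightarrow>
                  U \<inter> A \<noteq> {} \<Longrightarrow> V \<inter> A \<noteq> {} \<Longrightarrow> U \<inter> V \<inter> A \<noteq> {}"
  obtains x where "x \<in> topspace T" "\<And>U. U \<in> ClopUp T le \<Longrightarrow> x \<in> U \<longleftrightarrow> U \<inter> A \<noteq> {}"
proof -
  define \<F> where "\<F> = {U \<in> ClopUp T le. U \<inter> A \<noteq> {}}"
  define \<C> where "\<C> = \<F> \<union> (\<lambda>V. topspace T - V) ` {V \<in> ClopUp T le. V \<inter> A = {}}"
  have "\<forall>C\<in>\<C>. closedin T C"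
    unfolding \<C>_def \<F>_def using ClopUp_closedin ClopUp_openin by blast
  moreover have "\<Inter>\<G> \<noteq> {}" if "finite \<G>" "\<G> \<subseteq> \<C>" for \<G>
  proof -
    obtain a where a: "a \<in> A" "a \<in> \<Inter>(\<G> \<inter> \<F>)"
    proof (cases "\<G> \<inter> \<F> = {}")
      case True
      then show thesis
        using that A(2) by blast
    next
      case False
      then have "\<Inter>(\<G> \<inter> \<F>) \<inter> A \<noteq> {}"
        using Inter_ClopUp_meets[OF meets finite_Int[OF disjI1[OF \<open>finite \<G>\<close>]] False]
        unfolding \<F>_def by blast
      then show thesis
        using that by blast
    qed
    then have "a \<in> \<Inter>\<G>"
      using \<open>\<G> \<subseteq> \<C>\<close> A(1) unfolding \<C>_def by blast
    then show ?thesis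
      by blast
  qed
  ultimately have "\<Inter>\<C> \<noteq> {}"
    using compact by (simp add: compact_space_fip)
  then obtain x where x: "x \<in> \<Inter>\<C>"
    by blast
  have "topspace T \<in> \<C>"
    using A topspace_ClopUp unfolding \<C>_def \<F>_def by blast
  then have "x \<in> topspace T"
    using x by blast
  moreover have "x \<in> U \<longleftrightarrow> U \<inter> A \<noteq> {}" if "U \<in> ClopUp T le" for U
  proof
    assume "x \<in> U"
    then show "U \<inter> A \<noteq> {}"
      using x that unfolding \<C>_def by blast
  next
    assume "U \<inter> A \<noteq> {}"
    then show "x \<in> U"
      using x that unfolding \<C>_def \<F>_def by blast
  qed
  ultimately show thesis
    using that by blast
qed

end

locale l_space =
  fixes T :: "'a topology" and le :: "'a \<Rightarrow> 'a \<Rightarrow> bool"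
  assumes L_space: "L_space T le"

sublocale l_space \<subseteq> priestley
  using L_space by unfold_locales (simp add: L_space_def)

context l_space
begin

lemma is_upset_closure_of:
  assumes U: "is_upset T le U"
  shows "is_upset T le (T closure_of U)"
  unfolding is_upset_def
proof (intro conjI ballI impI closure_of_subset_topspace)
  fix x y
  assume x: "x \<in> T closure_of U" and y: "y \<in> topspace T" and "le x y"
  show "y \<in> T closure_of U"
  proof (rule ccontr)
    assume "y \<notin> T closure_of U"
    moreover have "openin T (topspace T - T closure_of U)"
      by (simp add: openin_diff)
    ultimately obtain C where C: "clopen_in T C" "y \<in> C" "C \<subseteq> topspace T - T closure_of U"
      using clopen_basis[of "topspace T - T closure_of U" y] y by blast
    \<comment> \<open>The down set of C is a clopen neighbourhood of x, so it meets U;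
      but U is an upset disjoint from C.\<close>
    have "clopen_in T (down_set T le C)"
      using C(1) L_space unfolding L_space_def by blast
    moreover have "x \<in> down_set T le C"
      using C(2) \<open>le x y\<close> x in_closure_of[of x T U] unfolding down_set_def by blast
    ultimately obtain z where "z \<in> U" "z \<in> down_set T le C"
      using x unfolding in_closure_of clopen_in_def by blast
    then obtain c where "c \<in> C" "le z c"
      unfolding down_set_def by blast
    then have "c \<in> U"
      using U C(3) \<open>z \<in> U\<close> unfolding is_upset_def by blast
    then show False
      using C(3) \<open>c \<in> C\<close> closure_of_subset[of U T] U unfolding is_upset_def by blast
  qed
qed

lemma closure_Union_ClopUp:
  assumes "\<G> \<subseteq> ClopUp T le"
  shows "T closure_of \<Union>\<G> \<in> ClopUp T le"
proof -
  have up: "is_upset T le (\<Union>\<G>)"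
    using assms unfolding ClopUp_def is_upset_def by blast
  have "openin T (\<Union>\<G>)"
    using assms ClopUp_openin by blast
  then have "openin T (T closure_of \<Union>\<G>)"
    using up L_space unfolding L_space_def by blast
  then show ?thesis
    using is_upset_closure_of[OF up] unfolding ClopUp_def clopen_in_def by simp
qed

abbreviation Y where "Y \<equiv> spatial_part T le"

abbreviation S where "S \<equiv> spatial_topology T le"

lemma spatial_part_subset_topspace: "Y \<subseteq> topspace T"
  unfolding spatial_part_def by blast

lemma openin_spatial_topology: "openin S V \<longleftrightarrow> (\<exists>U\<in>ClopUp T le. V = U \<inter> Y)"
proof -
  have "istopology (\<lambda>V. \<exists>U\<in>ClopUp T le. V = U \<inter> Y)"
    unfolding istopology_def
  proof (intro conjI allI impI)
    fix V W
    assume "\<exists>U\<in>ClopUp T le. V = U \<inter> Y" "\<exists>U\<in>ClopUp T le. W = U \<inter> Y"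
    then obtain U U' where "U \<in> ClopUp T le" "U' \<in> ClopUp T le" "V = U \<inter> Y" "W = U' \<inter> Y"
      by blast
    then have "U \<inter> U' \<in> ClopUp T le" "V \<inter> W = (U \<inter> U') \<inter> Y"
      by (auto intro: Int_ClopUp)
    then show "\<exists>U\<in>ClopUp T le. V \<inter> W = U \<inter> Y"
      by blast
  next
    fix \<K>
    assume \<K>: "\<forall>K\<in>\<K>. \<exists>U\<in>ClopUp T le. K = U \<inter> Y"
    \<comment> \<open>A union of clopen upsets is merely open; its closure is a clopen upset
      with the same trace on Y.\<close>
    define \<G> where "\<G> = {U \<in> ClopUp T le. U \<inter> Y \<subseteq> \<Union>\<K>}"
    have \<G>: "\<G> \<subseteq> ClopUp T le"
      unfolding \<G>_def by blast
    have "\<Union>\<K> = T closure_of \<Union>\<G> \<inter> Y"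
    proof
      show "T closure_of \<Union>\<G> \<inter> Y \<subseteq> \<Union>\<K>"
        using spatial_in_closure_Union_ClopUp[OF \<G>] unfolding \<G>_def by blast
      show "\<Union>\<K> \<subseteq> T closure_of \<Union>\<G> \<inter> Y"
      proof
        fix y
        assume "y \<in> \<Union>\<K>"
        then obtain K U where "K \<in> \<K>" "y \<in> K" "U \<in> ClopUp T le" "K = U \<inter> Y"
          using \<K> by blast
        then have "U \<in> \<G>" "y \<in> U" "y \<in> Y"
          unfolding \<G>_def by auto
        then show "y \<in> T closure_of \<Union>\<G> \<inter> Y"
          using closure_of_subset[of "\<Union>\<G>" T] \<G> ClopUp_subset_topspace by blast
      qed
    qed
    then show "\<exists>U\<in>ClopUp T le. \<Union>\<K> = U \<inter> Y"
      using closure_Union_ClopUp[OF \<G>] by blast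
  qed
  then show ?thesis
    by (simp add: spatial_topology_def)
qed

lemma topspace_spatial_topology: "topspace S = Y"
proof
  show "topspace S \<subseteq> Y"
    using openin_spatial_topology[of "topspace S"] by blast
  have "Y = topspace T \<inter> Y"
    using spatial_part_subset_topspace by blast
  then have "openin S Y"
    using openin_spatial_topology topspace_ClopUp by blast
  then show "Y \<subseteq> topspace S"
    by (rule openin_subset)
qed

lemma spatial_closure_of_singleton:
  assumes y: "y \<in> Y"
  shows "S closure_of {y} = {x \<in> Y. le x y}"
proof -
  have yT: "y \<in> topspace T"
    using y spatial_part_subset_topspace by blast
  have "x \<in> S closure_of {y} \<longleftrightarrow> le x y" if x: "x \<in> Y" for x
  proof -
    have xT: "x \<in> topspace T"
      using x spatial_part_subset_topspace by blast
    have "x \<in> S closure_of {y} \<longleftrightarrow> (\<forall>U\<in>ClopUp T le. x \<in> U \<longrightarrow> y \<in> U)"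
    proof
      assume "x \<in> S closure_of {y}"
      then show "\<forall>U\<in>ClopUp T le. x \<in> U \<longrightarrow> y \<in> U"
        using x unfolding in_closure_of openin_spatial_topology by blast
    next
      assume "\<forall>U\<in>ClopUp T le. x \<in> U \<longrightarrow> y \<in> U"
      then show "x \<in> S closure_of {y}"
        using x y unfolding in_closure_of openin_spatial_topology topspace_spatial_topology by blast
    qed
    also have "\<dots> \<longleftrightarrow> le x y"
      using ClopUp_separation[OF xT yT] ClopUp_upward[of _ T le x y] yT by blast
    finally show ?thesis .
  qed
  moreover have "S closure_of {y} \<subseteq> Y"
    using closure_of_subset_topspace[of S "{y}"] topspace_spatial_topology by simp
  ultimately show ?thesis
    by blast
qed

lemma spatial_if_ClopUp_iff_meets:
  assumes A: "A \<subseteq> Y" and xT: "x \<in> topspace T"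
    and x: "\<And>U. U \<in> ClopUp T le \<Longrightarrow> x \<in> U \<longleftrightarrow> U \<inter> A \<noteq> {}"
  shows "x \<in> Y"
proof -
  define \<W> where "\<W> = {U \<in> ClopUp T le. x \<notin> U}"
  have \<W>: "\<W> \<subseteq> ClopUp T le"
    unfolding \<W>_def by blast
  have closure_\<W>: "T closure_of \<Union>\<W> \<in> ClopUp T le"
    using closure_Union_ClopUp[OF \<W>] .
  have "T closure_of \<Union>\<W> \<inter> A = {}"
  proof -
    have "a \<notin> T closure_of \<Union>\<W>" if "a \<in> A" for a
    proof
      assume "a \<in> T closure_of \<Union>\<W>"
      then obtain U where "U \<in> \<W>" "a \<in> U"
        using spatial_in_closure_Union_ClopUp[OF \<W>] A \<open>a \<in> A\<close> by blast
      then show False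
        using x[of U] \<open>a \<in> A\<close> unfolding \<W>_def by blast
    qed
    then show ?thesis
      by blast
  qed
  then have "T closure_of \<Union>\<W> \<in> \<W>"
    using closure_\<W> x[OF closure_\<W>] unfolding \<W>_def by blast
  moreover have "\<Union>\<W> \<subseteq> topspace T"
    using \<W> ClopUp_subset_topspace by blast
  ultimately have "closedin T (\<Union>\<W>)"
    unfolding closure_of_subset_eq[symmetric] by blast
  moreover have "down_set T le {x} = topspace T - \<Union>\<W>"
    using topspace_diff_down_point[OF xT] unfolding \<W>_def down_set_def by blast
  ultimately have "openin T (down_set T le {x})"
    by (simp add: openin_diff)
  moreover have "closedin T (down_set T le {x})"
    using closedin_down_point[OF xT] .
  ultimately show ?thesis
    using xT unfolding spatial_part_def clopen_in_def by blast
qed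

lemma spatial_closure_of_singleton_inject:
  assumes "y \<in> Y" "z \<in> Y" "S closure_of {y} = S closure_of {z}"
  shows "y = z"
proof -
  have "{x \<in> Y. le x y} = {x \<in> Y. le x z}"
    using assms spatial_closure_of_singleton by simp
  then have "le y z" "le z y"
    using assms(1,2) spatial_part_subset_topspace le_refl by blast+
  then show ?thesis
    using assms(1,2) spatial_part_subset_topspace le_antisym by blast
qed

lemma irreducible_closed_spatial_ClopUp_Int:
  assumes irr: "irreducible_closed S A"
    and "U \<in> ClopUp T le" "V \<in> ClopUp T le" "U \<inter> A \<noteq> {}" "V \<inter> A \<noteq> {}"
  shows "U \<inter> V \<inter> A \<noteq> {}"
proof -
  have "closedin S A"
    using irr unfolding irreducible_closed_def by blast
  then have "A \<subseteq> Y"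
    using closedin_subset topspace_spatial_topology by blast
  then have "U \<inter> Y \<inter> A \<noteq> {}" "V \<inter> Y \<inter> A \<noteq> {}"
    using assms(4,5) by blast+
  moreover have "openin S (U \<inter> Y)" "openin S (V \<inter> Y)"
    using assms(2,3) openin_spatial_topology by blast+
  ultimately have "(U \<inter> Y) \<inter> (V \<inter> Y) \<inter> A \<noteq> {}"
    using irreducible_closed_open_Int[OF irr] by blast
  then show ?thesis
    by blast
qed

lemma closedin_spatial_eq_below:
  assumes A: "closedin S A" and xT: "x \<in> topspace T"
    and x: "\<And>U. U \<in> ClopUp T le \<Longrightarrow> x \<in> U \<longleftrightarrow> U \<inter> A \<noteq> {}"
  shows "A = {a \<in> Y. le a x}"
proof
  have AY: "A \<subseteq> Y"
    using A closedin_subset topspace_spatial_topology by blast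
  show "A \<subseteq> {a \<in> Y. le a x}"
  proof
    fix a
    assume "a \<in> A"
    have "le a x"
    proof (rule ccontr)
      assume "\<not> le a x"
      then obtain U where "U \<in> ClopUp T le" "a \<in> U" "x \<notin> U"
        using ClopUp_separation AY spatial_part_subset_topspace \<open>a \<in> A\<close> xT by blast
      then show False
        using x \<open>a \<in> A\<close> by blast
    qed
    then show "a \<in> {a \<in> Y. le a x}"
      using AY \<open>a \<in> A\<close> by blast
  qed
  have "openin S (Y - A)"
    using A topspace_spatial_topology by (simp add: closedin_def)
  then obtain U where U: "U \<in> ClopUp T le" "Y - A = U \<inter> Y"
    using openin_spatial_topology by blast
  then have "x \<notin> U"
    using x AY by blast
  then show "{a \<in> Y. le a x} \<subseteq> A"
    using U xT spatial_part_subset_topspace ClopUp_upward[of U T le _ x] by blast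
qed

lemma sober_spatial_topology: "sober_space S"
  unfolding sober_space_def
proof (intro allI impI)
  fix A
  assume irr: "irreducible_closed S A"
  then have A: "closedin S A" "A \<noteq> {}"
    unfolding irreducible_closed_def by blast+
  then have AY: "A \<subseteq> Y"
    using closedin_subset topspace_spatial_topology by blast
  then have "A \<subseteq> topspace T"
    using spatial_part_subset_topspace by blast
  then obtain x where xT: "x \<in> topspace T"
    and x: "\<And>U. U \<in> ClopUp T le \<Longrightarrow> x \<in> U \<longleftrightarrow> U \<inter> A \<noteq> {}"
    using exists_point_ClopUp_iff_meets[OF _ A(2) irreducible_closed_spatial_ClopUp_Int[OF irr]]
    by blast
  have xY: "x \<in> Y"
    using spatial_if_ClopUp_iff_meets[OF AY xT x] .
  have A_closure: "A = S closure_of {x}"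
    using closedin_spatial_eq_below[OF A(1) xT x] spatial_closure_of_singleton[OF xY] by simp
  show "\<exists>!x. x \<in> topspace S \<and> A = S closure_of {x}"
  proof (rule ex1I)
    show "x \<in> topspace S \<and> A = S closure_of {x}"
      using xY A_closure topspace_spatial_topology by blast
    show "z = x" if "z \<in> topspace S \<and> A = S closure_of {z}" for z
      using that xY A_closure spatial_closure_of_singleton_inject[of z x]
        topspace_spatial_topology by simp
  qed
qed

lemma compactin_spatial_ClopUp_cover:
  assumes K: "compactin S K" and \<W>: "\<W> \<subseteq> ClopUp T le" "K \<subseteq> \<Union>\<W>"
  obtains \<G> where "\<G> \<subseteq> \<W>" "finite \<G>" "K \<subseteq> \<Union>\<G>"
proof -
  have "K \<subseteq> Y"
    using K compactin_subset_topspace topspace_spatial_topology by blast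
  then have "K \<subseteq> \<Union>((\<lambda>W. W \<inter> Y) ` \<W>)"
    using \<W>(2) by blast
  moreover have "\<forall>B \<in> (\<lambda>W. W \<inter> Y) ` \<W>. openin S B"
    using \<W>(1) openin_spatial_topology by blast
  ultimately obtain \<F> where \<F>: "finite \<F>" "\<F> \<subseteq> (\<lambda>W. W \<inter> Y) ` \<W>" "K \<subseteq> \<Union>\<F>"
    using K unfolding compactin_def by meson
  then obtain \<G> where \<G>: "\<G> \<subseteq> \<W>" "finite \<G>" "\<F> = (\<lambda>W. W \<inter> Y) ` \<G>"
    by (meson finite_subset_image)
  have "K \<subseteq> \<Union>\<G>"
    using \<F>(3) \<G>(3) by auto
  with \<G>(1,2) show thesis
    by (rule that)
qed

lemma compactin_spatial_if_ClopUp_covers: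
  assumes "K \<subseteq> Y"
    and covers: "\<And>\<W>. \<W> \<subseteq> ClopUp T le \<Longrightarrow> K \<subseteq> \<Union>\<W> \<Longrightarrow>
                   \<exists>\<G>. \<G> \<subseteq> \<W> \<and> finite \<G> \<and> K \<subseteq> \<Union>\<G>"
  shows "compactin S K"
  unfolding compactin_def topspace_spatial_topology
proof (intro conjI allI impI assms(1))
  fix \<U>
  assume \<U>: "(\<forall>B\<in>\<U>. openin S B) \<and> K \<subseteq> \<Union>\<U>"
  then have "\<forall>B\<in>\<U>. \<exists>U. U \<in> ClopUp T le \<and> B = U \<inter> Y"
    unfolding openin_spatial_topology by blast
  then obtain f where f_ClopUp: "\<And>B. B \<in> \<U> \<Longrightarrow> f B \<in> ClopUp T le"
    and f_trace: "\<And>B. B \<in> \<U> \<Longrightarrow> B = f B \<inter> Y"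
    by (metis bchoice)
  have "f ` \<U> \<subseteq> ClopUp T le" "K \<subseteq> \<Union>(f ` \<U>)"
    using f_ClopUp f_trace \<U> by blast+
  then obtain \<G> where \<G>: "\<G> \<subseteq> f ` \<U>" "finite \<G>" "K \<subseteq> \<Union>\<G>"
    using covers by meson
  then obtain \<G>' where \<G>': "\<G>' \<subseteq> \<U>" "finite \<G>'" "\<G> = f ` \<G>'"
    by (meson finite_subset_image)
  have "K \<subseteq> \<Union>\<G>'"
  proof
    fix k
    assume "k \<in> K"
    then obtain B where "B \<in> \<G>'" "k \<in> f B"
      using \<G>(3) \<G>'(3) by blast
    then have "k \<in> B"
      using f_trace[of B] \<G>'(1) \<open>k \<in> K\<close> assms(1) by blast
    then show "k \<in> \<Union>\<G>'"
      using \<open>B \<in> \<G>'\<close> by blast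
  qed
  then show "\<exists>\<F>. finite \<F> \<and> \<F> \<subseteq> \<U> \<and> K \<subseteq> \<Union>\<F>"
    using \<G>' by blast
qed

lemma ClopSUp_subset_Union_if_spatial:
  assumes V: "V \<in> ClopSUp T le" and \<W>: "\<W> \<subseteq> ClopUp T le" "V \<inter> Y \<subseteq> \<Union>\<W>"
  shows "V \<subseteq> \<Union>\<W>"
proof
  fix v
  assume "v \<in> V"
  have VU: "V \<in> ClopUp T le"
    using V ClopSUp_subset_ClopUp by blast
  obtain m where m: "m \<in> minimal_elements le V" "le m v"
    using exists_minimal_below[OF ClopUp_closedin[OF VU] \<open>v \<in> V\<close>] by blast
  then have "m \<in> V \<inter> Y"
    using V unfolding ClopSUp_def scott_upset_def minimal_elements_def by blast
  then obtain W where "W \<in> \<W>" "m \<in> W"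
    using \<W>(2) by blast
  moreover have "v \<in> topspace T"
    using \<open>v \<in> V\<close> ClopUp_subset_topspace[OF VU] by blast
  ultimately show "v \<in> \<Union>\<W>"
    using ClopUp_upward[of W T le m v] \<W>(1) m(2) by blast
qed

lemma compactin_spatial_if_ClopSUp:
  assumes V: "V \<in> ClopSUp T le"
  shows "compactin S (V \<inter> Y)"
proof (rule compactin_spatial_if_ClopUp_covers[OF Int_lower2])
  fix \<W>
  assume \<W>: "\<W> \<subseteq> ClopUp T le" "V \<inter> Y \<subseteq> \<Union>\<W>"
  then have "V \<subseteq> \<Union>\<W>"
    using ClopSUp_subset_Union_if_spatial[OF V] by blast
  moreover have "compactin T V"
    using V ClopSUp_subset_ClopUp ClopUp_closedin closedin_compact_space[OF compact] by blast
  moreover have "\<forall>W\<in>\<W>. openin T W"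
    using \<W> ClopUp_openin by blast
  ultimately obtain \<G> where "finite \<G>" "\<G> \<subseteq> \<W>" "V \<subseteq> \<Union>\<G>"
    unfolding compactin_def by meson
  then show "\<exists>\<G>. \<G> \<subseteq> \<W> \<and> finite \<G> \<and> V \<inter> Y \<subseteq> \<Union>\<G>"
    by blast
qed

lemma compactly_based_if_algebraic:
  assumes "algebraic_L_space T le"
  shows "compactly_based S"
  unfolding compactly_based_def
proof (intro allI impI)
  fix W x
  assume "openin S W \<and> x \<in> W"
  then obtain U where U: "U \<in> ClopUp T le" "W = U \<inter> Y" "x \<in> U" "x \<in> Y"
    using openin_spatial_topology by blast
  then have "x \<in> T closure_of \<Union>{V \<in> ClopSUp T le. V \<subseteq> U}"
    using assms unfolding algebraic_L_space_def core_def by blast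
  then obtain V where V: "V \<in> ClopSUp T le" "V \<subseteq> U" "x \<in> V"
    using spatial_in_closure_Union_ClopUp[of "{V \<in> ClopSUp T le. V \<subseteq> U}"]
      ClopSUp_subset_ClopUp \<open>x \<in> Y\<close> by blast
  have "openin S (V \<inter> Y)"
    using V(1) ClopSUp_subset_ClopUp openin_spatial_topology by blast
  moreover have "compactin S (V \<inter> Y)"
    using compactin_spatial_if_ClopSUp[OF V(1)] .
  ultimately show "\<exists>K. openin S K \<and> compactin S K \<and> x \<in> K \<and> K \<subseteq> W"
    using V U by blast
qed

end

locale sl_space = l_space +
  assumes spatial_dense: "T closure_of spatial_part T le = topspace T"

lemma sl_space_if_SL_space: "SL_space T le \<Longrightarrow> sl_space T le"
  unfolding SL_space_def sl_space_def l_space_def sl_space_axioms_def by blast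

context sl_space
begin

lemma subset_closedin_if_spatial_subset:
  assumes "openin T V" "closedin T W" "V \<inter> Y \<subseteq> W"
  shows "V \<subseteq> W"
proof -
  have "V \<subseteq> T closure_of (V \<inter> Y)"
    using openin_Int_closure_of_subset[OF assms(1), of Y] spatial_dense openin_subset[OF assms(1)]
    by auto
  also have "\<dots> \<subseteq> W"
    using closure_of_minimal assms(2,3) by blast
  finally show ?thesis .
qed

lemma ClopSUp_if_compactin_spatial:
  assumes V: "V \<in> ClopUp T le" and K: "compactin S (V \<inter> Y)"
  shows "V \<in> ClopSUp T le"
proof -
  have "m \<in> Y" if m: "m \<in> minimal_elements le V" for m
  proof (rule ccontr)
    assume "m \<notin> Y"
    have mV: "m \<in> V" and m_min: "\<And>y. y \<in> V \<Longrightarrow> le y m \<Longrightarrow> y = m"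
      using m unfolding minimal_elements_def by blast+
    have mT: "m \<in> topspace T"
      using mV ClopUp_subset_topspace[OF V] by blast
    define \<W> where "\<W> = {W \<in> ClopUp T le. m \<notin> W}"
    have cover: "V \<inter> Y \<subseteq> \<Union>\<W>"
    proof
      fix y
      assume y: "y \<in> V \<inter> Y"
      then have "\<not> le y m"
        using m_min \<open>m \<notin> Y\<close> by blast
      moreover have "y \<in> topspace T"
        using y spatial_part_subset_topspace by blast
      ultimately obtain W where "W \<in> ClopUp T le" "y \<in> W" "m \<notin> W"
        using ClopUp_separation[of y m] mT by blast
      then show "y \<in> \<Union>\<W>"
        unfolding \<W>_def by blast
    qed
    have "\<W> \<subseteq> ClopUp T le"
      unfolding \<W>_def by blast
    then obtain \<G> where \<G>: "\<G> \<subseteq> \<W>" "finite \<G>" "V \<inter> Y \<subseteq> \<Union>\<G>"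
      using compactin_spatial_ClopUp_cover[OF K _ cover] by blast
    have "\<Union>\<G> \<in> ClopUp T le"
      using Union_ClopUp[OF \<G>(2)] \<G>(1) unfolding \<W>_def by blast
    then have "V \<subseteq> \<Union>\<G>"
      using subset_closedin_if_spatial_subset[OF ClopUp_openin[OF V] ClopUp_closedin \<G>(3)] by blast
    then show False
      using mV \<G>(1) unfolding \<W>_def by blast
  qed
  then show ?thesis
    using V unfolding ClopSUp_def ClopUp_def scott_upset_def clopen_in_def by blast
qed

lemma algebraic_if_compactly_based:
  assumes "compactly_based S"
  shows "algebraic_L_space T le"
  unfolding algebraic_L_space_def
proof (intro conjI ballI L_space)
  fix U
  assume U: "U \<in> ClopUp T le"
  have "U \<inter> Y \<subseteq> core T le U"
  proof
    fix y
    assume y: "y \<in> U \<inter> Y"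
    have "openin S (U \<inter> Y)"
      using U openin_spatial_topology by blast
    then obtain K where K: "openin S K" "compactin S K" "y \<in> K" "K \<subseteq> U \<inter> Y"
      using assms y unfolding compactly_based_def by blast
    then obtain V where V: "V \<in> ClopUp T le" "K = V \<inter> Y"
      using openin_spatial_topology by blast
    have "(V \<inter> U) \<inter> Y = K"
      using V K by blast
    then have "V \<inter> U \<in> ClopSUp T le"
      using ClopSUp_if_compactin_spatial Int_ClopUp[OF V(1) U] K(2) by simp
    moreover have "y \<in> V \<inter> U"
      using K V y by blast
    ultimately show "y \<in> core T le U"
      unfolding core_def by blast
  qed
  moreover have "core T le U \<subseteq> T closure_of core T le U"
    using U ClopUp_subset_topspace unfolding core_def by (intro closure_of_subset) blast
  ultimately show "U \<subseteq> T closure_of core T le U"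
    using subset_closedin_if_spatial_subset[OF ClopUp_openin[OF U] closedin_closure_of] by blast
qed

end

theorem theorem4p11:
  fixes T :: "'a topology" and le :: "'a \<Rightarrow> 'a \<Rightarrow> bool"
  assumes "SL_space T le"
  shows "algebraic_L_space T le \<longleftrightarrow>
           compactly_based (spatial_topology T le) \<and> sober_space (spatial_topology T le)"
proof -
  interpret sl_space T le
    using sl_space_if_SL_space[OF assms] .
  show ?thesis
    using compactly_based_if_algebraic algebraic_if_compactly_based sober_spatial_topology by blast
qed

end
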